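(* For any $a,b\in S_Z$, the vertices $a$ and $b$ are not adjacent in $\Gamma$.
   Context: All graphs are finite and simple. A graph $G$ is a minimal prime graph complement if $G$ has at least $2$ vertices and: (1) the complement $\overline{G}$ is connected; (2) $G$ is triangle-free; (3) $G$ is $3$-colorable; (4) for any two distinct nonadjacent vertices $u,v$ of $G$, adding the edge $uv$ to $G$ yields a graph that either contains a triangle or is not $3$-colorable. Standing setup: $\Gamma$ is a minimal prime graph complement with a vertex $X$ of degree $2$, whose two neighbors are $A$ and $B$. Among the vertices of $\Gamma$ other than $X,A,B$: $S_A$ is the set of those adjacent to $A$ but not $B$; $S_B$ the set of those adjacent to $B$ but not $A$; $S_Y$ the set of those adjacent to both $A$ and $B$; $S_Z$ the set of those adjacent to neither $A$ nor $B$. *)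

theory Defs
  imports Main
begin

definition simple_graph :: "'a set \<Rightarrow> ('a \<Rightarrow> 'a \<Rightarrow> bool) \<Rightarrow> bool" where
  "simple_graph V E \<longleftrightarrow> finite V \<and> (\<forall>u v. E u v \<longrightarrow> u \<in> V \<and> v \<in> V)
     \<and> (\<forall>u v. E u v \<longrightarrow> E v u) \<and> (\<forall>v. \<not> E v v)"

definition compl_edge :: "'a set \<Rightarrow> ('a \<Rightarrow> 'a \<Rightarrow> bool) \<Rightarrow> 'a \<Rightarrow> 'a \<Rightarrow> bool" where
  "compl_edge V E u v \<longleftrightarrow> u \<in> V \<and> v \<in> V \<and> u \<noteq> v \<and> \<not> E u v"

definition connected_graph :: "'a set \<Rightarrow> ('a \<Rightarrow> 'a \<Rightarrow> bool) \<Rightarrow> bool" where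
  "connected_graph V E \<longleftrightarrow> V \<noteq> {} \<and> (\<forall>u\<in>V. \<forall>v\<in>V. E\<^sup>*\<^sup>* u v)"

definition triangle_free :: "('a \<Rightarrow> 'a \<Rightarrow> bool) \<Rightarrow> bool" where
  "triangle_free E \<longleftrightarrow> \<not> (\<exists>x y z. E x y \<and> E y z \<and> E x z)"

definition colorable :: "'a set \<Rightarrow> ('a \<Rightarrow> 'a \<Rightarrow> bool) \<Rightarrow> nat \<Rightarrow> bool" where
  "colorable V E k \<longleftrightarrow> (\<exists>c :: 'a \<Rightarrow> nat. (\<forall>v\<in>V. c v < k) \<and> (\<forall>u v. E u v \<longrightarrow> c u \<noteq> c v))"

definition add_edge :: "('a \<Rightarrow> 'a \<Rightarrow> bool) \<Rightarrow> 'a \<Rightarrow> 'a \<Rightarrow> 'a \<Rightarrow> 'a \<Rightarrow> bool" where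
  "add_edge E u v = (\<lambda>x y. E x y \<or> (x = u \<and> y = v) \<or> (x = v \<and> y = u))"

definition minimal_prime_graph_complement :: "'a set \<Rightarrow> ('a \<Rightarrow> 'a \<Rightarrow> bool) \<Rightarrow> bool" where
  "minimal_prime_graph_complement V E \<longleftrightarrow>
     simple_graph V E \<and> card V \<ge> 2
     \<and> connected_graph V (compl_edge V E)
     \<and> triangle_free E
     \<and> colorable V E 3
     \<and> (\<forall>u\<in>V. \<forall>v\<in>V. u \<noteq> v \<and> \<not> E u v \<longrightarrow>
          \<not> triangle_free (add_edge E u v) \<or> \<not> colorable V (add_edge E u v) 3)"

definition S_Z :: "'a set \<Rightarrow> ('a \<Rightarrow> 'a \<Rightarrow> bool) \<Rightarrow> 'a \<Rightarrow> 'a \<Rightarrow> 'a \<Rightarrow> 'a set" where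
  "S_Z V E X A B = {v \<in> V - {X, A, B}. \<not> E v A \<and> \<not> E v B}"

end

theory Submission
  imports Defs
begin

text \<open>If two nonadjacent vertices without a common neighbour had different colours in a
  proper 3-colouring, joining them would give a triangle-free 3-colourable supergraph, contradicting
  minimality. The only neighbours A, B of X are adjacent to no vertex of S_Z, so every vertex of
  S_Z has the colour of X in any 3-colouring, and two adjacent ones would clash.\<close>

lemma triangle_free_add_edge:
  assumes "simple_graph V E" and "triangle_free E" and "u \<noteq> v"
    and no_common: "\<And>w. \<not> (E u w \<and> E v w)"
  shows "triangle_free (add_edge E u v)"
proof -
  have sym: "\<And>x y. E x y \<Longrightarrow> E y x" and irr: "\<And>x. \<not> E x x"
    using assms(1) unfolding simple_graph_def by blast+
  have tf: "\<not> (\<exists>x y z. E x y \<and> E y z \<and> E x z)"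
    using assms(2) unfolding triangle_free_def .
  show ?thesis
    unfolding triangle_free_def add_edge_def
    by (intro notI, elim exE conjE disjE)
      (use tf irr no_common \<open>u \<noteq> v\<close> in \<open>blast dest: sym\<close>)+
qed

lemma colorable_add_edge:
  fixes c :: "'a \<Rightarrow> nat"
  assumes "\<forall>x\<in>V. c x < k" and "\<forall>x y. E x y \<longrightarrow> c x \<noteq> c y" and "c u \<noteq> c v"
  shows "colorable V (add_edge E u v) k"
  unfolding colorable_def add_edge_def
  by (rule exI[of _ c]) (use assms in auto)

lemma minimal_prime_graph_complement_same_color:
  fixes c :: "'a \<Rightarrow> nat"
  assumes mp: "minimal_prime_graph_complement V E"
    and "u \<in> V" "v \<in> V" "u \<noteq> v" "\<not> E u v"
    and no_common: "\<And>w. \<not> (E u w \<and> E v w)"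
    and c: "\<forall>x\<in>V. c x < 3" "\<forall>x y. E x y \<longrightarrow> c x \<noteq> c y"
  shows "c u = c v"
proof (rule ccontr)
  assume "c u \<noteq> c v"
  have "simple_graph V E" and "triangle_free E"
    using mp unfolding minimal_prime_graph_complement_def by blast+
  from \<open>c u \<noteq> c v\<close> have "colorable V (add_edge E u v) 3"
    by (rule colorable_add_edge[OF c])
  moreover have "triangle_free (add_edge E u v)"
    using \<open>simple_graph V E\<close> \<open>triangle_free E\<close> \<open>u \<noteq> v\<close> no_common
    by (rule triangle_free_add_edge)
  moreover have "\<not> triangle_free (add_edge E u v) \<or> \<not> colorable V (add_edge E u v) 3"
    using mp assms(2-5) unfolding minimal_prime_graph_complement_def by blast
  ultimately show False
    by blast
qed

theorem lemma7:
  fixes V :: "'a set" and E :: "'a \<Rightarrow> 'a \<Rightarrow> bool" and X A B a b :: 'a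
  assumes "minimal_prime_graph_complement V E"
    and "X \<in> V"
    and "A \<noteq> B"
    and "{y \<in> V. E X y} = {A, B}"
    and "a \<in> S_Z V E X A B" and "b \<in> S_Z V E X A B"
  shows "\<not> E a b"
proof
  assume ab: "E a b"
  have sym: "\<And>x y. E x y \<Longrightarrow> E y x" and inV: "\<And>x y. E x y \<Longrightarrow> x \<in> V"
    using assms(1) unfolding minimal_prime_graph_complement_def simple_graph_def by blast+
  obtain c :: "'a \<Rightarrow> nat" where c: "\<forall>v\<in>V. c v < 3" "\<forall>u v. E u v \<longrightarrow> c u \<noteq> c v"
    using assms(1) unfolding minimal_prime_graph_complement_def colorable_def by blast
  have X_nbrs: "\<And>y. E X y \<Longrightarrow> y = A \<or> y = B"
    using assms(4) sym inV by blast
  have same_color_as_X: "c s = c X" if "s \<in> S_Z V E X A B" for s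
  proof (rule minimal_prime_graph_complement_same_color[OF assms(1) _ assms(2) _ _ _ c])
    show "s \<in> V" "s \<noteq> X"
      using that unfolding S_Z_def by auto
    have "\<not> E s A" "\<not> E s B" "s \<noteq> A" "s \<noteq> B"
      using that unfolding S_Z_def by auto
    then show "\<not> E s X" and "\<And>w. \<not> (E s w \<and> E X w)"
      using X_nbrs sym by blast+
  qed
  have "c a = c b"
    using same_color_as_X assms(5,6) by simp
  then show False
    using c(2) ab by blast
qed

end
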